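(* Let $a>0$. Let $\theta$ have Beta$(a,a)$ density $B(a,a)^{-1}\theta^{a-1}(1-\theta)^{a-1}$ on $(0,1]$ and, conditionally on $\theta$, let $\mathbf{x}\in\mathbb{R}^N$ have i.i.d. $\mathcal{N}(0,\theta)$ components. For $N\neq 4(a-1)$ set $\gamma=\mathbf{x}^{T}\mathbf{x}/N$, $\alpha=1-4(a-1)/N$, $\beta=1-2(a-1)/N+\gamma$, and \[ \widehat{\theta}^{\mathrm{MAP}}(\mathbf{x})=\frac{\beta-\sqrt{\beta^2-4\alpha\gamma}}{2\alpha},\qquad \widehat{\theta}_2=\frac{\beta+\sqrt{\beta^2-4\alpha\gamma}}{2\alpha}, \] ($\widehat{\theta}^{\mathrm{MAP}}$ being the maximizer over $\theta\in[0,1]$ of the posterior density $p(\theta\mid\mathbf{x})$). Then, as $N\to\infty$ (under the joint distribution of $(\mathbf{x},\theta)$): (i) $\widehat{\theta}^{\mathrm{MAP}}(\mathbf{x})$ is asymptotically equivalent in probability to $\widehat{\theta}^{\mathrm{ML}}(\mathbf{x})=\mathbf{x}^{T}\mathbf{x}/N$, i.e. $\widehat{\theta}^{\mathrm{MAP}}(\mathbf{x})=\frac{\mathbf{x}^{T}\mathbf{x}}{N}(1+\varepsilon_N)$ with $\varepsilon_N\to 0$ in probability; and (ii) $\widehat{\theta}_2\to 1$ in probability.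
   Context: Convergence in probability: $v_N\to\ell$ in probability means for every $\delta>0$, $\Pr(|v_N-\ell|<\delta)\to 1$ as $N\to\infty$. Asymptotic equivalence in probability $v_N\sim w_N$ means $v_N=w_N(1+\varepsilon_N)$ with $\varepsilon_N\to0$ in probability. *)

theory Defs
  imports "HOL-Probability.Probability"
begin

definition beta_prior_density :: "real \<Rightarrow> real \<Rightarrow> real" where
  "beta_prior_density a t =
     (if 0 < t \<and> t \<le> 1 then t powr (a - 1) * (1 - t) powr (a - 1) / Beta a a else 0)"

text \<open>Joint law of (theta, x) with x in R^N (coordinates indexed by {..<N}):
  theta ~ Beta(a,a); given theta, x has i.i.d. N(0,theta) components
  (normal_density takes the standard deviation, here sqrt theta).\<close>
definition joint_model :: "real \<Rightarrow> nat \<Rightarrow> (real \<times> (nat \<Rightarrow> real)) measure" where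
  "joint_model a N =
     bind (density lborel (beta_prior_density a))
       (\<lambda>t. distr (PiM {..<N} (\<lambda>_. density lborel (normal_density 0 (sqrt t))))
                  (borel \<Otimes>\<^sub>M PiM {..<N} (\<lambda>_. borel)) (\<lambda>x. (t, x)))"

definition gamma_stat :: "nat \<Rightarrow> (nat \<Rightarrow> real) \<Rightarrow> real" where
  "gamma_stat N x = (\<Sum>i<N. (x i)\<^sup>2) / real N"

definition alpha_coef :: "real \<Rightarrow> nat \<Rightarrow> real" where
  "alpha_coef a N = 1 - 4 * (a - 1) / real N"

definition beta_coef :: "real \<Rightarrow> nat \<Rightarrow> (nat \<Rightarrow> real) \<Rightarrow> real" where
  "beta_coef a N x = 1 - 2 * (a - 1) / real N + gamma_stat N x"

definition theta_MAP :: "real \<Rightarrow> nat \<Rightarrow> (nat \<Rightarrow> real) \<Rightarrow> real" where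
  "theta_MAP a N x =
     (beta_coef a N x - sqrt ((beta_coef a N x)\<^sup>2 - 4 * alpha_coef a N * gamma_stat N x))
       / (2 * alpha_coef a N)"

definition theta_2 :: "real \<Rightarrow> nat \<Rightarrow> (nat \<Rightarrow> real) \<Rightarrow> real" where
  "theta_2 a N x =
     (beta_coef a N x + sqrt ((beta_coef a N x)\<^sup>2 - 4 * alpha_coef a N * gamma_stat N x))
       / (2 * alpha_coef a N)"

end

theory Submission
  imports Defs
begin

text \<open>
  Given \<open>\<theta>\<close>, the statistic \<open>\<gamma> = x\<^sup>Tx/N\<close> has mean \<open>\<theta>\<close> and variance \<open>2\<theta>\<^sup>2/N\<close>, so by
  Chebyshev it is within \<open>\<eta>\<close> of \<open>\<theta>\<close> except with probability \<open>2/(N\<eta>\<^sup>2)\<close>. The Beta prior puts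
  no mass at \<open>0\<close> or \<open>1\<close>, hence for every \<open>e > 0\<close> there is \<open>c > 0\<close> such that, for large \<open>N\<close>,
  \<open>\<gamma> \<in> [c, 1 - c]\<close> with probability at least \<open>1 - e\<close> under the joint law.

  Both estimators are roots of \<open>\<alpha>\<theta>\<^sup>2 - \<beta>\<theta> + \<gamma>\<close> with \<open>\<alpha> = 1 - 4u\<close>, \<open>\<beta> = 1 - 2u + \<gamma>\<close> and
  \<open>u = (a - 1)/N\<close>. At \<open>u = 0\<close> the roots are exactly \<open>\<gamma>\<close> and \<open>1\<close>, and for \<open>\<gamma> \<in> [c, 1 - c]\<close> they
  move by \<open>O(u/c\<^sup>2)\<close> uniformly in \<open>\<gamma>\<close>. As \<open>u \<rightarrow> 0\<close> deterministically, both claims follow.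
\<close>

section \<open>Products of densities and second moments of sums\<close>

lemma indicator_PiE_eq_prod:
  fixes A :: "'i \<Rightarrow> 'a set"
  assumes "finite I" "x \<in> extensional I"
  shows "indicator (PiE I A) x = (\<Prod>i\<in>I. indicator (A i) (x i) :: 'b::comm_semiring_1)"
  using assms by (auto simp: indicator_def PiE_iff extensional_def prod_zero)

lemma PiM_density:
  fixes f :: "'i \<Rightarrow> 'a \<Rightarrow> ennreal"
  assumes I: "finite I" and M: "product_sigma_finite M"
    and density: "product_sigma_finite (\<lambda>i. density (M i) (f i))"
    and f[measurable]: "\<And>i. f i \<in> borel_measurable (M i)"
  shows "PiM I (\<lambda>i. density (M i) (f i)) = density (PiM I M) (\<lambda>x. \<Prod>i\<in>I. f i (x i))"
proof -
  interpret M: product_sigma_finite M by (fact M)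
  interpret product_sigma_finite "\<lambda>i. density (M i) (f i)" by (fact density)
  show ?thesis
  proof (rule PiM_eqI[symmetric, OF I])
    show "sets (density (PiM I M) (\<lambda>x. \<Prod>i\<in>I. f i (x i))) = sets (PiM I (\<lambda>i. density (M i) (f i)))"
      by (auto intro!: sets_PiM_cong)
  next
    fix A assume A: "\<And>i. i \<in> I \<Longrightarrow> A i \<in> sets (density (M i) (f i))"
    then have "PiE I A \<in> sets (PiM I M)"
      by (auto intro!: sets_PiM_I_finite I)
    then have "emeasure (density (PiM I M) (\<lambda>x. \<Prod>i\<in>I. f i (x i))) (PiE I A)
        = \<integral>\<^sup>+x. (\<Prod>i\<in>I. f i (x i) * indicator (A i) (x i)) \<partial>PiM I M"
      using I by (auto simp: emeasure_density space_PiM PiE_iff indicator_PiE_eq_prod prod.distrib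
          intro!: nn_integral_cong)
    also have "\<dots> = (\<Prod>i\<in>I. \<integral>\<^sup>+z. f i z * indicator (A i) z \<partial>M i)"
      using A I by (intro M.product_nn_integral_prod) auto
    also have "\<dots> = (\<Prod>i\<in>I. emeasure (density (M i) (f i)) (A i))"
      using A by (intro prod.cong refl) (simp add: emeasure_density)
    finally show "emeasure (density (PiM I M) (\<lambda>x. \<Prod>i\<in>I. f i (x i))) (PiE I A)
        = (\<Prod>i\<in>I. emeasure (density (M i) (f i)) (A i))" .
  qed
qed

lemma (in finite_product_prob_space) integral_square_sum_centered:
  fixes f :: "_ \<Rightarrow> _ \<Rightarrow> real"
  assumes f[measurable]: "\<And>i. i \<in> I \<Longrightarrow> f i \<in> borel_measurable (M i)"
    and square_integrable: "\<And>i. i \<in> I \<Longrightarrow> integrable (M i) (\<lambda>z. (f i z)\<^sup>2)"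
    and centered: "\<And>i. i \<in> I \<Longrightarrow> (\<integral>z. f i z \<partial>M i) = 0"
  shows "integrable (PiM I M) (\<lambda>x. (\<Sum>i\<in>I. f i (x i))\<^sup>2)"
    and "(\<integral>x. (\<Sum>i\<in>I. f i (x i))\<^sup>2 \<partial>PiM I M) = (\<Sum>i\<in>I. \<integral>z. (f i z)\<^sup>2 \<partial>M i)"
proof -
  \<comment> \<open>Each cross term, written as a product over all coordinates, has a factorising integral.\<close>
  define g where "g i j k z = (if k = i then f i z else 1) * (if k = j then f j z else 1)"
    for i j k z
  have square_eq: "(\<Sum>i\<in>I. f i (x i))\<^sup>2 = (\<Sum>i\<in>I. \<Sum>j\<in>I. \<Prod>k\<in>I. g i j k (x k))" for x
    unfolding power2_eq_square sum_product g_def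
    by (intro sum.cong refl) (simp add: prod.distrib finite_index)
  have integrable_f: "integrable (M i) (f i)" if "i \<in> I" for i
    using that by (intro M.square_integrable_imp_integrable[OF f square_integrable])
  have integrable_g: "integrable (M k) (g i j k)" if "i \<in> I" "j \<in> I" for i j k
    using that integrable_f square_integrable
    by (cases "k = i"; cases "k = j") (auto simp: g_def[abs_def] power2_eq_square)
  have integral_g: "(\<integral>z. g i j k z \<partial>M k) =
      (if k = i \<and> k = j then \<integral>z. (f i z)\<^sup>2 \<partial>M i else if k = i \<or> k = j then 0 else 1)"
    if "i \<in> I" "j \<in> I" for i j k
    using that centered by (auto simp: g_def power2_eq_square M.prob_space)
  have integral_prod_g: "(\<integral>x. (\<Prod>k\<in>I. g i j k (x k)) \<partial>PiM I M) =
      (if i = j then \<integral>z. (f i z)\<^sup>2 \<partial>M i else 0)" if "i \<in> I" "j \<in> I" for i j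
  proof -
    have "(\<integral>x. (\<Prod>k\<in>I. g i j k (x k)) \<partial>PiM I M) = (\<Prod>k\<in>I. \<integral>z. g i j k z \<partial>M k)"
      using that by (intro product_integral_prod[OF finite_index] integrable_g)
    also have "\<dots> = (if i = j then \<integral>z. (f i z)\<^sup>2 \<partial>M i else 0)"
    proof (cases "i = j")
      case True
      then show ?thesis using that by (simp add: integral_g finite_index cong: if_cong)
    next
      case False
      then show ?thesis using that by (auto simp: integral_g finite_index intro!: prod_zero bexI[of _ i])
    qed
    finally show ?thesis .
  qed
  have integrable_prod_g: "integrable (PiM I M) (\<lambda>x. \<Prod>k\<in>I. g i j k (x k))"
    if "i \<in> I" "j \<in> I" for i j
    using that by (intro product_integrable_prod[OF finite_index] integrable_g)
  show "integrable (PiM I M) (\<lambda>x. (\<Sum>i\<in>I. f i (x i))\<^sup>2)"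
    unfolding square_eq by (intro Bochner_Integration.integrable_sum integrable_prod_g)
  show "(\<integral>x. (\<Sum>i\<in>I. f i (x i))\<^sup>2 \<partial>PiM I M) = (\<Sum>i\<in>I. \<integral>z. (f i z)\<^sup>2 \<partial>M i)"
    unfolding square_eq
    by (simp add: integral_sum integrable_prod_g integral_prod_g if_distrib
        finite_index cong: sum.cong)
qed

section \<open>Gaussian samples\<close>

text \<open>For \<open>t = 0\<close> the density \<open>normal_density 0 0\<close> is identically zero, so \<open>centered_normal t\<close>
  is in general only a subprobability measure.\<close>
definition centered_normal :: "real \<Rightarrow> real measure" where
  "centered_normal t = density lborel (normal_density 0 (sqrt t))"

lemma sets_centered_normal [simp, measurable_cong]: "sets (centered_normal t) = sets borel"
  by (simp add: centered_normal_def)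

lemma space_centered_normal [simp]: "space (centered_normal t) = UNIV"
  by (simp add: centered_normal_def)

lemma prob_space_centered_normal:
  assumes "t \<noteq> 0"
  shows "prob_space (centered_normal t)"
proof -
  have "normal_density 0 (sqrt t) = normal_density 0 \<bar>sqrt t\<bar>"
    by (simp add: normal_density_def fun_eq_iff)
  then show ?thesis
    using prob_space_normal_density[of "\<bar>sqrt t\<bar>" 0] assms by (simp add: centered_normal_def)
qed

lemma subprob_space_centered_normal: "subprob_space (centered_normal t)"
proof (cases "t = 0")
  case True
  then have "centered_normal t = density lborel (\<lambda>_. 0)"
    by (simp add: centered_normal_def normal_density_def)
  then show ?thesis
    by (intro subprob_spaceI) (auto simp: emeasure_density)
next
  case False
  then show ?thesis
    by (intro prob_space_imp_subprob_space prob_space_centered_normal)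
qed

lemma product_sigma_finite_centered_normal: "product_sigma_finite (\<lambda>_. centered_normal t)"
  using subprob_space_centered_normal subprob_space_imp_sigma_finite
  by (auto intro: product_sigma_finite.intro)

lemma
  assumes "0 < t"
  shows integrable_centered_normal_power: "integrable (centered_normal t) (\<lambda>z. z ^ k)"
    and integral_centered_normal_power2: "(\<integral>z. z\<^sup>2 \<partial>centered_normal t) = t"
    and integral_centered_normal_power4: "(\<integral>z. z ^ 4 \<partial>centered_normal t) = 3 * t\<^sup>2"
proof -
  have moment: "(\<integral>z. z ^ (2 * k) \<partial>centered_normal t) = fact (2 * k) / ((2 / t) ^ k * fact k)" for k
  proof -
    have "has_bochner_integral lborel (\<lambda>z. normal_density 0 (sqrt t) z * (z - 0) ^ (2 * k))
        (fact (2 * k) / ((2 / (sqrt t)\<^sup>2) ^ k * fact k))"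
      by (rule normal_moment_even) (use assms in simp)
    then show ?thesis using assms
      by (simp add: centered_normal_def integral_density has_bochner_integral_integral_eq)
  qed
  show "integrable (centered_normal t) (\<lambda>z. z ^ k)"
  proof -
    have "integrable lborel (\<lambda>z. normal_density 0 (sqrt t) z * (z - 0) ^ k)"
      by (rule integrable_normal_moment) (use assms in simp)
    then show ?thesis by (simp add: centered_normal_def integrable_density)
  qed
  show "(\<integral>z. z\<^sup>2 \<partial>centered_normal t) = t"
    using moment[of 1] assms by simp
  show "(\<integral>z. z ^ 4 \<partial>centered_normal t) = 3 * t\<^sup>2"
    using moment[of 2] assms by (simp add: fact_numeral power2_eq_square field_simps)
qed

lemma centered_normal_square_sub:
  assumes t: "0 < t"
  shows "(\<integral>z. z\<^sup>2 - t \<partial>centered_normal t) = 0"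
    and "integrable (centered_normal t) (\<lambda>z. (z\<^sup>2 - t)\<^sup>2)"
    and "(\<integral>z. (z\<^sup>2 - t)\<^sup>2 \<partial>centered_normal t) = 2 * t\<^sup>2"
proof -
  interpret prob_space "centered_normal t"
    using t by (intro prob_space_centered_normal) simp
  have "measure (centered_normal t) UNIV = 1"
    using prob_space by simp
  then show "(\<integral>z. z\<^sup>2 - t \<partial>centered_normal t) = 0"
    and "integrable (centered_normal t) (\<lambda>z. (z\<^sup>2 - t)\<^sup>2)"
    and "(\<integral>z. (z\<^sup>2 - t)\<^sup>2 \<partial>centered_normal t) = 2 * t\<^sup>2"
    using t integrable_centered_normal_power[of t 2] integrable_centered_normal_power[of t 4]
    by (simp_all add: power2_diff integral_centered_normal_power2 integral_centered_normal_power4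
        power_mult_distrib[symmetric] power2_eq_square[of t] flip: power_add)
qed

definition gaussian_sample :: "nat \<Rightarrow> real \<Rightarrow> (nat \<Rightarrow> real) measure" where
  "gaussian_sample N t = PiM {..<N} (\<lambda>_. centered_normal t)"

lemma sets_gaussian_sample [simp, measurable_cong]:
  "sets (gaussian_sample N t) = sets (PiM {..<N} (\<lambda>_. borel))"
  unfolding gaussian_sample_def by (intro sets_PiM_cong) auto

lemma space_gaussian_sample [simp]: "space (gaussian_sample N t) = space (PiM {..<N} (\<lambda>_. borel))"
  using sets_eq_imp_space_eq[OF sets_gaussian_sample] .

lemma subprob_space_gaussian_sample: "subprob_space (gaussian_sample N t)"
proof (rule subprob_spaceI)
  interpret product_sigma_finite "\<lambda>_. centered_normal t"
    by (rule product_sigma_finite_centered_normal)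
  have "emeasure (gaussian_sample N t) (space (gaussian_sample N t)) =
      (\<Prod>i<N. emeasure (centered_normal t) UNIV)"
    unfolding gaussian_sample_def space_PiM by (subst emeasure_PiM) auto
  also have "\<dots> \<le> 1"
    using subprob_space.subprob_emeasure_le_1[OF subprob_space_centered_normal]
    by (intro prod_le_1) auto
  finally show "emeasure (gaussian_sample N t) (space (gaussian_sample N t)) \<le> 1" .
qed (simp add: space_PiM PiE_eq_empty_iff)

lemma prob_space_gaussian_sample: "t \<noteq> 0 \<Longrightarrow> prob_space (gaussian_sample N t)"
  unfolding gaussian_sample_def by (intro prob_space_PiM prob_space_centered_normal)

lemma gaussian_sample_eq_density:
  "gaussian_sample N t =
     density (PiM {..<N} (\<lambda>_. lborel)) (\<lambda>x. \<Prod>i<N. ennreal (normal_density 0 (sqrt t) (x i)))"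
  unfolding gaussian_sample_def centered_normal_def
  by (intro PiM_density product_sigma_finite_centered_normal[unfolded centered_normal_def]
      product_sigma_finite.intro lborel.sigma_finite_measure_axioms) auto

lemma measurable_gaussian_sample:
  "gaussian_sample N \<in> measurable borel (subprob_algebra (PiM {..<N} (\<lambda>_. borel)))"
proof (rule measurable_subprob_algebra)
  show "subprob_space (gaussian_sample N t)" for t
    by (rule subprob_space_gaussian_sample)
next
  fix A assume A: "A \<in> sets (PiM {..<N} (\<lambda>_. borel :: real measure))"
  interpret lborel_power: finite_product_sigma_finite "\<lambda>_. lborel :: real measure" "{..<N}"
    by (intro finite_product_sigma_finite.intro product_sigma_finite.intro
        finite_product_sigma_finite_axioms.intro lborel.sigma_finite_measure_axioms) auto
  have sets_lborel_power: "sets (PiM {..<N} (\<lambda>_. lborel :: real measure)) = sets (PiM {..<N} (\<lambda>_. borel))"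
    by (intro sets_PiM_cong) auto
  have "emeasure (gaussian_sample N t) A =
      \<integral>\<^sup>+x. (\<Prod>i<N. ennreal (normal_density 0 (sqrt t) (x i))) * indicator A x \<partial>PiM {..<N} (\<lambda>_. lborel)"
    for t
    using A sets_lborel_power by (simp add: gaussian_sample_eq_density emeasure_density)
  moreover have "(\<lambda>t. \<integral>\<^sup>+x. (\<Prod>i<N. ennreal (normal_density 0 (sqrt t) (x i))) * indicator A x
      \<partial>PiM {..<N} (\<lambda>_. lborel)) \<in> borel_measurable borel"
    using A unfolding normal_density_def
    by (intro lborel_power.borel_measurable_nn_integral) (measurable, simp add: sets_lborel_power)
  ultimately show "(\<lambda>t. emeasure (gaussian_sample N t) A) \<in> borel_measurable borel"
    by simp
qed auto

lemma borel_measurable_gamma_stat [measurable]: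
  "gamma_stat N \<in> borel_measurable (PiM {..<N} (\<lambda>_. borel))"
  unfolding gamma_stat_def by measurable

lemma measure_gamma_stat_deviation:
  assumes t: "0 < t" and N: "0 < N" and \<eta>: "0 < \<eta>"
  shows "measure (gaussian_sample N t) {x \<in> space (gaussian_sample N t). \<eta> \<le> \<bar>gamma_stat N x - t\<bar>}
           \<le> 2 * t\<^sup>2 / (real N * \<eta>\<^sup>2)"
proof -
  interpret finite_product_prob_space "\<lambda>_. centered_normal t" "{..<N}"
    by (intro finite_product_prob_space.intro finite_product_sigma_finite.intro
        product_sigma_finite_centered_normal product_prob_space.intro product_prob_space_axioms.intro
        finite_product_sigma_finite_axioms.intro prob_space_centered_normal) (use t in auto)
  define S where "S x = (\<Sum>i<N. (x i)\<^sup>2 - t)" for x :: "nat \<Rightarrow> real"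
  have integrable_S: "integrable (gaussian_sample N t) (\<lambda>x. (S x)\<^sup>2)"
    and integral_S: "(\<integral>x. (S x)\<^sup>2 \<partial>gaussian_sample N t) = 2 * real N * t\<^sup>2"
    using integral_square_sum_centered[of "\<lambda>_ z. z\<^sup>2 - t"] centered_normal_square_sub[OF t]
    by (simp_all add: S_def gaussian_sample_def)
  have "{x \<in> space (gaussian_sample N t). \<eta> \<le> \<bar>gamma_stat N x - t\<bar>}
      \<subseteq> {x \<in> space (gaussian_sample N t). (real N * \<eta>)\<^sup>2 \<le> (S x)\<^sup>2}"
  proof safe
    fix x assume "\<eta> \<le> \<bar>gamma_stat N x - t\<bar>"
    moreover have "S x = real N * (gamma_stat N x - t)"
      using N by (simp add: S_def gamma_stat_def sum_subtractf algebra_simps)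
    ultimately show "(real N * \<eta>)\<^sup>2 \<le> (S x)\<^sup>2"
      using N \<eta> by (simp add: abs_le_square_iff[symmetric] abs_mult)
  qed
  then have "measure (gaussian_sample N t) {x \<in> space (gaussian_sample N t). \<eta> \<le> \<bar>gamma_stat N x - t\<bar>}
      \<le> measure (gaussian_sample N t) {x \<in> space (gaussian_sample N t). (real N * \<eta>)\<^sup>2 \<le> (S x)\<^sup>2}"
    unfolding gaussian_sample_def by (intro finite_measure_mono) (auto simp: S_def)
  also have "\<dots> \<le> 2 * real N * t\<^sup>2 / (real N * \<eta>)\<^sup>2"
    using integral_Markov_inequality_measure[OF integrable_S, of "space (gaussian_sample N t)"] N \<eta>
    by (simp add: integral_S)
  also have "\<dots> = 2 * t\<^sup>2 / (real N * \<eta>\<^sup>2)"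
    using N by (simp add: power2_eq_square)
  finally show ?thesis .
qed

lemma measure_gamma_stat_Icc:
  assumes c: "0 < c" and t: "2 * c \<le> t" "t \<le> 1 - 2 * c" and N: "0 < N"
  shows "1 - 2 / (real N * c\<^sup>2)
           \<le> measure (gaussian_sample N t) {x \<in> space (gaussian_sample N t). gamma_stat N x \<in> {c..1 - c}}"
proof -
  interpret prob_space "gaussian_sample N t"
    using c t by (intro prob_space_gaussian_sample) simp
  have "space (gaussian_sample N t) - {x \<in> space (gaussian_sample N t). gamma_stat N x \<in> {c..1 - c}}
      \<subseteq> {x \<in> space (gaussian_sample N t). c \<le> \<bar>gamma_stat N x - t\<bar>}"
    using t by auto
  then have "1 - prob {x \<in> space (gaussian_sample N t). gamma_stat N x \<in> {c..1 - c}}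
      \<le> prob {x \<in> space (gaussian_sample N t). c \<le> \<bar>gamma_stat N x - t\<bar>}"
    by (subst prob_compl[symmetric]) (auto intro!: finite_measure_mono)
  also have "\<dots> \<le> 2 * t\<^sup>2 / (real N * c\<^sup>2)"
    using c t N by (intro measure_gamma_stat_deviation) auto
  also have "\<dots> \<le> 2 / (real N * c\<^sup>2)"
    using c t N by (intro divide_right_mono) (auto simp: power_le_one)
  finally show ?thesis by simp
qed

section \<open>The Beta prior and the joint model\<close>

lemma ex_Icc_emeasure_gt:
  fixes M :: "real measure"
  assumes sets_M: "sets M = sets borel" and r: "r < emeasure M {0<..<1}"
  shows "\<exists>c>0. r < emeasure M {c..1 - c}"
proof -
  define A where "A n = {inverse (real (Suc n)) .. 1 - inverse (real (Suc n))}" for n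
  have range_A: "range A \<subseteq> sets M"
    unfolding sets_M A_def by auto
  have incseq_A: "incseq A"
    by (intro incseq_SucI) (auto simp: A_def field_simps)
  have Union_A: "(\<Union>n. A n) = {0<..<1}"
  proof
    show "(\<Union>n. A n) \<subseteq> {0<..<1}"
    proof
      fix x assume "x \<in> (\<Union>n. A n)"
      then obtain n where "x \<in> A n" ..
      moreover have "0 < inverse (real (Suc n))" by simp
      ultimately show "x \<in> {0<..<1}"
        unfolding A_def atLeastAtMost_iff greaterThanLessThan_iff by linarith
    qed
    show "{0<..<1} \<subseteq> (\<Union>n. A n)"
    proof
      fix x :: real assume "x \<in> {0<..<1}"
      then obtain n where "inverse (real (Suc n)) < min x (1 - x)"
        using reals_Archimedean[of "min x (1 - x)"] by auto
      then have "x \<in> A n"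
        by (simp add: A_def)
      then show "x \<in> (\<Union>n. A n)" by blast
    qed
  qed
  have "(\<lambda>n. emeasure M (A n)) \<longlonglongrightarrow> emeasure M {0<..<1}"
    using Lim_emeasure_incseq[OF range_A incseq_A] unfolding Union_A .
  from order_tendstoD(1)[OF this r] obtain n where "r < emeasure M (A n)"
    by (auto simp: eventually_sequentially)
  then show ?thesis
    by (intro exI[of _ "inverse (real (Suc n))"]) (simp add: A_def)
qed

definition beta_prior :: "real \<Rightarrow> real measure" where
  "beta_prior a = density lborel (beta_prior_density a)"

lemma borel_measurable_beta_prior_density [measurable]:
  "beta_prior_density a \<in> borel_measurable borel"
  unfolding beta_prior_density_def by measurable

lemma sets_beta_prior [simp, measurable_cong]: "sets (beta_prior a) = sets borel"
  by (simp add: beta_prior_def)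

lemma space_beta_prior [simp]: "space (beta_prior a) = UNIV"
  by (simp add: beta_prior_def)

lemma
  assumes "0 < a"
  shows emeasure_beta_prior_Ioo: "emeasure (beta_prior a) {0<..<1} = 1"
    and prob_space_beta_prior: "prob_space (beta_prior a)"
proof -
  have Beta: "0 < Beta a a"
    using assms by (simp add: Beta_def)
  have "(beta_prior_density a has_integral 1) {0<..<1} \<longleftrightarrow>
      ((\<lambda>t. t powr (a - 1) * (1 - t) powr (a - 1) / Beta a a) has_integral 1) {0<..<1}"
    by (intro has_integral_cong) (simp add: beta_prior_density_def)
  then have "(beta_prior_density a has_integral 1) {0<..<1}"
    using has_integral_divide[OF has_integral_Beta_real[OF assms assms], of "Beta a a"] Beta
    by (simp add: has_integral_Icc_iff_Ioo)
  moreover have "0 \<le> beta_prior_density a t" for t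
    using Beta by (simp add: beta_prior_density_def)
  ultimately show Ioo: "emeasure (beta_prior a) {0<..<1} = 1"
    using nn_integral_has_integral_lebesgue'[of "{0<..<1}" "beta_prior_density a" 1]
    by (simp add: beta_prior_def emeasure_density)
  have "emeasure (beta_prior a) UNIV = (\<integral>\<^sup>+t. ennreal (beta_prior_density a t) \<partial>lborel)"
    by (simp add: beta_prior_def emeasure_density)
  also have "\<dots> = (\<integral>\<^sup>+t. ennreal (beta_prior_density a t) * indicator {0<..<1} t \<partial>lborel)"
    using AE_lborel_singleton[of 1]
    by (intro nn_integral_cong_AE) (auto elim!: eventually_mono simp: beta_prior_density_def)
  also have "\<dots> = emeasure (beta_prior a) {0<..<1}"
    by (simp add: beta_prior_def emeasure_density)
  finally show "prob_space (beta_prior a)"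
    using Ioo by (intro prob_spaceI) simp
qed

lemma joint_model_eq_bind:
  "joint_model a N =
     beta_prior a \<bind> (\<lambda>t. distr (gaussian_sample N t) (borel \<Otimes>\<^sub>M PiM {..<N} (\<lambda>_. borel)) (Pair t))"
  unfolding joint_model_def beta_prior_def gaussian_sample_def centered_normal_def ..

lemma measurable_sample_kernel:
  "(\<lambda>t. distr (gaussian_sample N t) (borel \<Otimes>\<^sub>M PiM {..<N} (\<lambda>_. borel)) (Pair t))
     \<in> beta_prior a \<rightarrow>\<^sub>M subprob_algebra (borel \<Otimes>\<^sub>M PiM {..<N} (\<lambda>_. borel))"
  unfolding measurable_cong_sets[OF sets_beta_prior refl]
  by (rule measurable_distr2[OF _ measurable_gaussian_sample]) simp

lemma sets_joint_model [simp, measurable_cong]: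
  "sets (joint_model a N) = sets (borel \<Otimes>\<^sub>M PiM {..<N} (\<lambda>_. borel))"
  unfolding joint_model_eq_bind
  by (rule sets_bind_measurable[OF measurable_sample_kernel]) simp

lemma space_joint_model [simp]:
  "space (joint_model a N) = space (borel \<Otimes>\<^sub>M PiM {..<N} (\<lambda>_. borel))"
  using sets_eq_imp_space_eq[OF sets_joint_model] .

lemma subprob_space_joint_model: "0 < a \<Longrightarrow> subprob_space (joint_model a N)"
  unfolding joint_model_eq_bind
  by (rule subprob_space_bind[OF prob_space_imp_subprob_space[OF prob_space_beta_prior]
        measurable_sample_kernel])

lemma measure_joint_model_ge:
  assumes a: "0 < a" and G: "G \<in> sets (joint_model a N)" and T: "T \<in> sets borel" and r: "0 \<le> r"
    and kernel: "\<And>t. t \<in> T \<Longrightarrow>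
      r \<le> measure (gaussian_sample N t) {x \<in> space (gaussian_sample N t). (t, x) \<in> G}"
  shows "r * measure (beta_prior a) T \<le> measure (joint_model a N) G"
proof -
  interpret prior: prob_space "beta_prior a"
    using a by (rule prob_space_beta_prior)
  interpret joint: subprob_space "joint_model a N"
    using a by (rule subprob_space_joint_model)
  have "ennreal (r * measure (beta_prior a) T) = (\<integral>\<^sup>+t. ennreal r * indicator T t \<partial>beta_prior a)"
    using T r by (simp add: nn_integral_cmult_indicator prior.emeasure_eq_measure ennreal_mult)
  also have "\<dots> \<le> (\<integral>\<^sup>+t. emeasure (gaussian_sample N t) {x \<in> space (gaussian_sample N t). (t, x) \<in> G}
      \<partial>beta_prior a)"
    using kernel subprob_space.axioms(1)[OF subprob_space_gaussian_sample]
    by (intro nn_integral_mono) (auto split: split_indicator simp: finite_measure.emeasure_eq_measure)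
  also have "\<dots> = emeasure (joint_model a N) G"
    using G unfolding joint_model_eq_bind
    by (subst emeasure_bind[OF _ measurable_sample_kernel])
      (auto simp: emeasure_distr vimage_def Int_def conj_commute
        intro!: nn_integral_cong arg_cong2[where f=emeasure])
  finally show ?thesis
    by (simp add: joint.emeasure_eq_measure)
qed

lemma joint_model_gamma_stat_tight:
  assumes a: "0 < a" and e: "0 < e" "e < 1"
  shows "\<exists>c>0. \<forall>\<^sub>F N in sequentially.
           1 - e \<le> measure (joint_model a N)
                      {\<omega> \<in> space (joint_model a N). gamma_stat N (snd \<omega>) \<in> {c..1 - c}}"
proof -
  interpret prior: prob_space "beta_prior a"
    using a by (rule prob_space_beta_prior)
  obtain c2 where c2: "0 < c2" "ennreal (1 - e/2) < emeasure (beta_prior a) {c2..1 - c2}"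
    using ex_Icc_emeasure_gt[of "beta_prior a" "ennreal (1 - e/2)"] e
    by (auto simp: emeasure_beta_prior_Ioo[OF a])
  define c where "c = c2 / 2"
  have c: "0 < c" and prior: "1 - e/2 < measure (beta_prior a) {2 * c..1 - 2 * c}"
    using c2 e by (simp_all add: c_def prior.emeasure_eq_measure ennreal_less_iff)
  have "\<forall>\<^sub>F N in sequentially. 0 < N \<and> 2 / c\<^sup>2 / real N < e/2"
    by (intro eventually_conj eventually_gt_at_top order_tendstoD(2)[OF lim_const_over_n])
      (use e in simp)
  then have "\<forall>\<^sub>F N in sequentially. 1 - e \<le> measure (joint_model a N)
      {\<omega> \<in> space (joint_model a N). gamma_stat N (snd \<omega>) \<in> {c..1 - c}}"
  proof eventually_elim
    case (elim N)
    then have "1 - e/2 \<le> measure (gaussian_sample N t)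
        {x \<in> space (gaussian_sample N t). gamma_stat N x \<in> {c..1 - c}}"
      if "t \<in> {2 * c..1 - 2 * c}" for t
      using measure_gamma_stat_Icc[OF c _ _, of t N] that by (simp add: field_simps)
    then have "(1 - e/2) * measure (beta_prior a) {2 * c..1 - 2 * c}
        \<le> measure (joint_model a N) {\<omega> \<in> space (joint_model a N). gamma_stat N (snd \<omega>) \<in> {c..1 - c}}"
      using e by (intro measure_joint_model_ge[OF a]) (auto simp: space_pair_measure)
    moreover have "(1 - e/2) * (1 - e/2) \<le> (1 - e/2) * measure (beta_prior a) {2 * c..1 - 2 * c}"
      using e prior by (intro mult_left_mono) auto
    moreover have "1 - e \<le> (1 - e/2) * (1 - e/2)"
      by (simp add: algebra_simps)
    ultimately show ?case
      by linarith
  qed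
  with c show ?thesis
    by blast
qed

lemma tendsto_measure_joint_model_1:
  assumes a: "0 < a" and H: "\<And>N. H N \<in> sets (joint_model a N)"
    and eventually_H: "\<And>c. 0 < c \<Longrightarrow> \<forall>\<^sub>F N in sequentially. \<forall>\<omega>\<in>space (joint_model a N).
           gamma_stat N (snd \<omega>) \<in> {c..1 - c} \<longrightarrow> \<omega> \<in> H N"
  shows "(\<lambda>N. measure (joint_model a N) (H N)) \<longlonglongrightarrow> 1"
proof (rule tendstoI)
  fix e :: real assume "0 < e"
  then have "0 < min (e/2) (1/2)" "min (e/2) (1/2) < 1"
    by auto
  then obtain c where c: "0 < c" and tight: "\<forall>\<^sub>F N in sequentially.
      1 - min (e/2) (1/2) \<le> measure (joint_model a N)
        {\<omega> \<in> space (joint_model a N). gamma_stat N (snd \<omega>) \<in> {c..1 - c}}"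
    using joint_model_gamma_stat_tight[OF a] by blast
  show "\<forall>\<^sub>F N in sequentially. dist (measure (joint_model a N) (H N)) 1 < e"
    using tight eventually_H[OF c]
  proof eventually_elim
    case (elim N)
    interpret subprob_space "joint_model a N"
      using a by (rule subprob_space_joint_model)
    have "measure (joint_model a N) {\<omega> \<in> space (joint_model a N). gamma_stat N (snd \<omega>) \<in> {c..1 - c}}
        \<le> measure (joint_model a N) (H N)"
      using elim(2) H by (intro finite_measure_mono) auto
    with elim(1) \<open>0 < e\<close> subprob_measure_le_1[of "H N"] show ?case
      by (simp add: dist_real_def)
  qed
qed

section \<open>Perturbation of the roots\<close>

lemma abs_sqrt_diff_le:
  fixes D y m :: real
  assumes D: "0 \<le> D" and m: "0 < m" "m \<le> y"
  shows "\<bar>sqrt D - y\<bar> \<le> \<bar>D - y\<^sup>2\<bar> / m"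
proof -
  have "\<bar>sqrt D - y\<bar> * (sqrt D + y) = \<bar>(sqrt D - y) * (sqrt D + y)\<bar>"
    using D m by (simp add: abs_mult)
  also have "\<dots> = \<bar>D - y\<^sup>2\<bar>"
    using D by (simp add: algebra_simps flip: power2_eq_square)
  finally have "\<bar>sqrt D - y\<bar> * (sqrt D + y) = \<bar>D - y\<^sup>2\<bar>" .
  moreover have "m \<le> sqrt D + y"
    using real_sqrt_ge_zero[OF D] m by linarith
  then have "\<bar>sqrt D - y\<bar> * m \<le> \<bar>sqrt D - y\<bar> * (sqrt D + y)"
    by (rule mult_left_mono) simp
  ultimately show ?thesis
    using m by (simp add: field_simps)
qed

lemma sqrt_discriminant_close:
  fixes c u \<gamma> :: real
  assumes c: "0 < c" and \<gamma>: "c \<le> \<gamma>" "\<gamma> \<le> 1 - c" and u: "\<bar>u\<bar> \<le> c\<^sup>2 / 16"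
  shows "\<bar>sqrt ((1 - 2 * u + \<gamma>)\<^sup>2 - 4 * (1 - 4 * u) * \<gamma>) - (1 - \<gamma>)\<bar> \<le> 9 * (\<bar>u\<bar> / c)"
proof -
  define D where "D = (1 - 2 * u + \<gamma>)\<^sup>2 - 4 * (1 - 4 * u) * \<gamma>"
  have "c\<^sup>2 \<le> (1 - \<gamma>)\<^sup>2" and "(1 - \<gamma>)\<^sup>2 \<le> 1"
    using c \<gamma> by (auto intro: power_mono simp: power_le_one)
  then have u_small: "\<bar>u\<bar> \<le> 1/16"
    using u by linarith
  have "D - (1 - \<gamma>)\<^sup>2 = 4 * u * (3 * \<gamma> - 1 + u)"
    by (simp add: D_def algebra_simps power2_eq_square)
  then have "\<bar>D - (1 - \<gamma>)\<^sup>2\<bar> = 4 * \<bar>u\<bar> * \<bar>3 * \<gamma> - 1 + u\<bar>"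
    by (simp add: abs_mult)
  also have "\<dots> \<le> 4 * \<bar>u\<bar> * (9/4)"
    using \<gamma> c u_small by (intro mult_left_mono) arith+
  finally have D_close: "\<bar>D - (1 - \<gamma>)\<^sup>2\<bar> \<le> 9 * \<bar>u\<bar>"
    by simp
  then have "0 \<le> D"
    using \<open>c\<^sup>2 \<le> (1 - \<gamma>)\<^sup>2\<close> u c by arith
  then have "\<bar>sqrt D - (1 - \<gamma>)\<bar> \<le> \<bar>D - (1 - \<gamma>)\<^sup>2\<bar> / c"
    using c \<gamma> by (intro abs_sqrt_diff_le) auto
  also have "\<dots> \<le> 9 * \<bar>u\<bar> / c"
    using D_close c by (intro divide_right_mono) auto
  finally show ?thesis
    by (simp add: D_def)
qed

lemma quadratic_roots_perturbation:
  fixes c u \<gamma> :: real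
  assumes c: "0 < c" and \<gamma>: "c \<le> \<gamma>" "\<gamma> \<le> 1 - c" and u: "\<bar>u\<bar> \<le> c\<^sup>2 / 16"
  defines "\<alpha> \<equiv> 1 - 4 * u" and "\<beta> \<equiv> 1 - 2 * u + \<gamma>"
  shows "\<bar>(\<beta> - sqrt (\<beta>\<^sup>2 - 4 * \<alpha> * \<gamma>)) / (2 * \<alpha>) / \<gamma> - 1\<bar> \<le> 20 * \<bar>u\<bar> / c\<^sup>2"
    and "\<bar>(\<beta> + sqrt (\<beta>\<^sup>2 - 4 * \<alpha> * \<gamma>)) / (2 * \<alpha>) - 1\<bar> \<le> 20 * \<bar>u\<bar> / c\<^sup>2"
proof -
  define E where "E = sqrt (\<beta>\<^sup>2 - 4 * \<alpha> * \<gamma>) - (1 - \<gamma>)"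
  have E: "\<bar>E\<bar> \<le> 9 * (\<bar>u\<bar> / c)"
    unfolding E_def \<alpha>_def \<beta>_def by (rule sqrt_discriminant_close[OF c \<gamma> u])
  have "c \<le> 1"
    using \<gamma> by linarith
  then have u_le: "\<bar>u\<bar> \<le> \<bar>u\<bar> / c" "\<bar>u\<bar> / c \<le> \<bar>u\<bar> / c\<^sup>2"
    using c by (auto simp: field_simps power2_eq_square intro: mult_left_le_one_le)
  have "c\<^sup>2 \<le> 1"
    using c \<open>c \<le> 1\<close> by (simp add: power_le_one)
  then have \<alpha>: "1/2 \<le> \<alpha>"
    using u by (simp add: \<alpha>_def abs_le_iff)
  have "\<bar>(\<beta> - sqrt (\<beta>\<^sup>2 - 4 * \<alpha> * \<gamma>)) / (2 * \<alpha>) / \<gamma> - 1\<bar>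
      = \<bar>- E - 2 * u + 8 * u * \<gamma>\<bar> / (2 * \<alpha> * \<gamma>)"
    using \<alpha> c \<gamma> by (simp add: E_def \<alpha>_def \<beta>_def field_simps abs_div)
  also have "\<dots> \<le> 19 * (\<bar>u\<bar> / c) / c"
  proof (rule frac_le)
    have "\<bar>u * \<gamma>\<bar> \<le> \<bar>u\<bar>"
      using \<gamma> c by (simp add: abs_mult mult_left_le)
    then show "\<bar>- E - 2 * u + 8 * u * \<gamma>\<bar> \<le> 19 * (\<bar>u\<bar> / c)"
      using E u_le by arith
    show "c \<le> 2 * \<alpha> * \<gamma>"
      using \<alpha> \<gamma> c mult_mono[of 1 "2 * \<alpha>" c \<gamma>] by simp
  qed (use c in auto)
  also have "\<dots> = 19 * \<bar>u\<bar> / c\<^sup>2"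
    by (simp add: power2_eq_square)
  finally show "\<bar>(\<beta> - sqrt (\<beta>\<^sup>2 - 4 * \<alpha> * \<gamma>)) / (2 * \<alpha>) / \<gamma> - 1\<bar> \<le> 20 * \<bar>u\<bar> / c\<^sup>2"
    using c by (simp add: divide_right_mono)
  have "\<bar>(\<beta> + sqrt (\<beta>\<^sup>2 - 4 * \<alpha> * \<gamma>)) / (2 * \<alpha>) - 1\<bar> = \<bar>E + 6 * u\<bar> / (2 * \<alpha>)"
    using \<alpha> by (simp add: E_def \<alpha>_def \<beta>_def field_simps abs_div)
  also have "\<dots> \<le> 15 * (\<bar>u\<bar> / c) / 1"
    using E u_le \<alpha> by (intro frac_le) arith+
  also have "\<dots> \<le> 20 * \<bar>u\<bar> / c\<^sup>2"
    using u_le by simp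
  finally show "\<bar>(\<beta> + sqrt (\<beta>\<^sup>2 - 4 * \<alpha> * \<gamma>)) / (2 * \<alpha>) - 1\<bar> \<le> 20 * \<bar>u\<bar> / c\<^sup>2" .
qed

text \<open>The value on \<open>gamma_stat N x = 0\<close> is immaterial: there \<open>theta_MAP a N x = 0\<close> as well
  once \<open>N \<ge> 2 (a - 1)\<close>.\<close>
definition theta_MAP_rel_error :: "real \<Rightarrow> nat \<Rightarrow> (nat \<Rightarrow> real) \<Rightarrow> real" where
  "theta_MAP_rel_error a N x =
     (if gamma_stat N x = 0 then 0 else theta_MAP a N x / gamma_stat N x - 1)"

lemma borel_measurable_theta_MAP_rel_error [measurable]:
  "theta_MAP_rel_error a N \<in> borel_measurable (PiM {..<N} (\<lambda>_. borel))"
  unfolding theta_MAP_rel_error_def theta_MAP_def beta_coef_def by measurable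

lemma borel_measurable_theta_2 [measurable]:
  "theta_2 a N \<in> borel_measurable (PiM {..<N} (\<lambda>_. borel))"
  unfolding theta_2_def beta_coef_def by measurable

lemma eventually_theta_MAP_eq:
  "\<forall>\<^sub>F N in sequentially. real N \<noteq> 4 * (a - 1) \<and>
     (\<forall>x. theta_MAP a N x = gamma_stat N x * (1 + theta_MAP_rel_error a N x))"
proof -
  have "\<forall>\<^sub>F N in sequentially. 4 * \<bar>a - 1\<bar> < real N"
    using filterlim_real_sequentially by (simp add: filterlim_at_top_dense)
  then show ?thesis
  proof eventually_elim
    case (elim N)
    then have "4 * (a - 1) < real N" and "2 * (a - 1) / real N \<le> 1"
      by (auto simp: abs_real_def field_simps split: if_splits)
    then show ?case
      by (auto simp: theta_MAP_rel_error_def theta_MAP_def beta_coef_def)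
  qed
qed

lemma eventually_roots_close:
  assumes c: "0 < c" and \<delta>: "0 < \<delta>"
  shows "\<forall>\<^sub>F N in sequentially. \<forall>x. gamma_stat N x \<in> {c..1 - c} \<longrightarrow>
           \<bar>theta_MAP_rel_error a N x\<bar> < \<delta> \<and> \<bar>theta_2 a N x - 1\<bar> < \<delta>"
proof -
  have "\<forall>\<^sub>F N in sequentially. \<bar>(a - 1) / real N\<bar> < min (c\<^sup>2 / 16) (\<delta> * c\<^sup>2 / 20)"
    using tendstoD[OF lim_const_over_n[of "a - 1"], of "min (c\<^sup>2 / 16) (\<delta> * c\<^sup>2 / 20)"] c \<delta>
    by (simp add: dist_real_def)
  then show ?thesis
  proof eventually_elim
    case (elim N)
    define u where "u = (a - 1) / real N"
    have u: "\<bar>u\<bar> \<le> c\<^sup>2 / 16" and "\<bar>u\<bar> < \<delta> * c\<^sup>2 / 20"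
      using elim by (simp_all add: u_def)
    then have "20 * \<bar>u\<bar> / c\<^sup>2 < \<delta>"
      using c by (simp add: field_simps)
    moreover have coefs: "alpha_coef a N = 1 - 4 * u" "beta_coef a N x = 1 - 2 * u + gamma_stat N x" for x
      by (simp_all add: alpha_coef_def beta_coef_def u_def)
    ultimately show ?case
      using quadratic_roots_perturbation[OF c _ _ u] c
      unfolding theta_MAP_rel_error_def theta_MAP_def theta_2_def coefs by fastforce
  qed
qed

theorem proposition2:
  fixes a :: real
  assumes "a > 0"
  shows "(\<exists>\<epsilon> :: nat \<Rightarrow> real \<times> (nat \<Rightarrow> real) \<Rightarrow> real.
            (\<forall>\<^sub>F N in sequentially. real N \<noteq> 4 * (a - 1) \<and>
               (\<forall>\<omega>\<in>space (joint_model a N).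
                  theta_MAP a N (snd \<omega>) = gamma_stat N (snd \<omega>) * (1 + \<epsilon> N \<omega>))) \<and>
            (\<forall>\<delta>>0. (\<lambda>N. measure (joint_model a N)
                        {\<omega> \<in> space (joint_model a N). \<bar>\<epsilon> N \<omega>\<bar> < \<delta>}) \<longlonglongrightarrow> 1))
       \<and> (\<forall>\<delta>>0. (\<lambda>N. measure (joint_model a N)
                   {\<omega> \<in> space (joint_model a N). \<bar>theta_2 a N (snd \<omega>) - 1\<bar> < \<delta>}) \<longlonglongrightarrow> 1)"
proof -
  have "(\<lambda>N. measure (joint_model a N)
      {\<omega> \<in> space (joint_model a N). \<bar>theta_MAP_rel_error a N (snd \<omega>)\<bar> < \<delta>}) \<longlonglongrightarrow> 1"
    and "(\<lambda>N. measure (joint_model a N)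
      {\<omega> \<in> space (joint_model a N). \<bar>theta_2 a N (snd \<omega>) - 1\<bar> < \<delta>}) \<longlonglongrightarrow> 1"
    if "0 < \<delta>" for \<delta>
    using assms
    by (rule tendsto_measure_joint_model_1, measurable,
        auto elim!: eventually_mono[OF eventually_roots_close[OF _ that]])+
  then show ?thesis
    using eventually_theta_MAP_eq[of a]
    by (intro conjI exI[of _ "\<lambda>N \<omega>. theta_MAP_rel_error a N (snd \<omega>)"]) (auto elim: eventually_mono)
qed

end
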